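(* Let $K\subseteq\mathbb{R}^n$ be a bounded star-shaped set with diameter $d$, and let $\sigma>0$. For any $\varepsilon\in(0,1/2)$, $$\mathfrak{M}\gtrsim \varepsilon\sigma^2\wedge d^2,$$ i.e. $\mathfrak{M}\ge a\,(\varepsilon\sigma^2\wedge d^2)$ for some absolute constant $a>0$.
   Context: Model: the unknown mean $\mu$ lies in $K$. The uncorrupted sample is $\tilde X_i=\mu+\xi_i$, $i=1,\dots,N$, with $\xi_i$ i.i.d. copies of $\xi$ whose distribution belongs to $\Xi_{\sigma^2}$, the family of all distributions on $\mathbb{R}^n$ with mean zero and covariance $\Sigma\preceq\sigma^2 I$. An adversary $\mathcal{C}$, which may inspect the whole uncorrupted sample and knows the model and estimator, replaces at most $\varepsilon N$ of the points by arbitrary points; one observes $X=\mathcal{C}(\tilde X)$. The minimax risk is $$\mathfrak{M}=\inf_{\hat\mu}\sup_{\mu\in K}\sup_{\xi\in\Xi_{\sigma^2}}\sup_{\mathcal{C}}\mathbb{E}_\mu\|\hat\mu(\mathcal{C}(\tilde X))-\mu\|^2.$$ Star-shaped: there is $k^*\in K$ with $(1-t)k^*+tk\in K$ for all $k\in K$, $t\in[0,1]$. Diameter $d=\sup_{x,y\in K}\|x-y\|$; $a\wedge b=\min(a,b)$. *)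

theory Defs
  imports "HOL-Probability.Probability"
begin

text \<open>Vectors of R^n are represented as extensional functions on the index set {..<n},
  i.e. elements of the space of the finite product measure below. This allows the
  dimension n to be quantified inside the statement (needed for an absolute constant).\<close>

definition vec_space :: "nat \<Rightarrow> (nat \<Rightarrow> real) measure" where
  "vec_space n = Pi\<^sub>M {..<n} (\<lambda>_. borel)"

definition vadd :: "nat \<Rightarrow> (nat \<Rightarrow> real) \<Rightarrow> (nat \<Rightarrow> real) \<Rightarrow> (nat \<Rightarrow> real)" where
  "vadd n x y = (\<lambda>i\<in>{..<n}. x i + y i)"

definition sqnorm :: "nat \<Rightarrow> (nat \<Rightarrow> real) \<Rightarrow> real" where
  "sqnorm n x = (\<Sum>i<n. (x i)\<^sup>2)"

definition diam_n :: "nat \<Rightarrow> (nat \<Rightarrow> real) set \<Rightarrow> real" where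
  "diam_n n K = (SUP x\<in>K. SUP y\<in>K. sqrt (sqnorm n (\<lambda>i. x i - y i)))"

definition bounded_n :: "nat \<Rightarrow> (nat \<Rightarrow> real) set \<Rightarrow> bool" where
  "bounded_n n K \<longleftrightarrow> (\<exists>B. \<forall>x\<in>K. sqnorm n x \<le> B)"

definition star_shaped_n :: "nat \<Rightarrow> (nat \<Rightarrow> real) set \<Rightarrow> bool" where
  "star_shaped_n n K \<longleftrightarrow> (\<exists>ks\<in>K. \<forall>k\<in>K. \<forall>t\<in>{0..1::real}.
      (\<lambda>i\<in>{..<n}. (1 - t) * ks i + t * k i) \<in> K)"

text \<open>The family Xi_{sg^2}: distributions on R^n with mean zero and covariance
  Sigma \<preceq> sg^2 I (second moments finite, v^T Sigma v \<le> sg^2 for unit v).\<close>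
definition Xi :: "nat \<Rightarrow> real \<Rightarrow> (nat \<Rightarrow> real) measure set" where
  "Xi n s2 = {P. prob_space P \<and> sets P = sets (vec_space n) \<and>
      (\<forall>i<n. integrable P (\<lambda>x. x i) \<and> integrable P (\<lambda>x. (x i)\<^sup>2) \<and> (\<integral>x. x i \<partial>P) = 0) \<and>
      (\<forall>v. (\<Sum>i<n. (v i)\<^sup>2) = 1 \<longrightarrow> (\<integral>x. (\<Sum>i<n. v i * x i)\<^sup>2 \<partial>P) \<le> s2)}"

definition sample_space :: "nat \<Rightarrow> nat \<Rightarrow> (nat \<Rightarrow> nat \<Rightarrow> real) measure" where
  "sample_space n N = Pi\<^sub>M {..<N} (\<lambda>_. vec_space n)"

definition clean_sample :: "nat \<Rightarrow> nat \<Rightarrow> (nat \<Rightarrow> real) \<Rightarrow> (nat \<Rightarrow> real) measure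
    \<Rightarrow> (nat \<Rightarrow> nat \<Rightarrow> real) measure" where
  "clean_sample n N mu P = distr (Pi\<^sub>M {..<N} (\<lambda>_. P)) (sample_space n N)
      (\<lambda>xs. \<lambda>j\<in>{..<N}. vadd n mu (xs j))"

definition adversaries :: "nat \<Rightarrow> nat \<Rightarrow> real \<Rightarrow> ((nat \<Rightarrow> nat \<Rightarrow> real) \<Rightarrow> (nat \<Rightarrow> nat \<Rightarrow> real)) set" where
  "adversaries n N eps = {C \<in> measurable (sample_space n N) (sample_space n N).
      \<forall>X\<in>space (sample_space n N). real (card {j\<in>{..<N}. C X j \<noteq> X j}) \<le> eps * real N}"

definition estimators :: "nat \<Rightarrow> nat \<Rightarrow> ((nat \<Rightarrow> nat \<Rightarrow> real) \<Rightarrow> (nat \<Rightarrow> real)) set" where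
  "estimators n N = measurable (sample_space n N) (vec_space n)"

definition risk :: "nat \<Rightarrow> nat \<Rightarrow> ((nat \<Rightarrow> nat \<Rightarrow> real) \<Rightarrow> (nat \<Rightarrow> real)) \<Rightarrow> (nat \<Rightarrow> real)
    \<Rightarrow> (nat \<Rightarrow> real) measure \<Rightarrow> ((nat \<Rightarrow> nat \<Rightarrow> real) \<Rightarrow> (nat \<Rightarrow> nat \<Rightarrow> real)) \<Rightarrow> ennreal" where
  "risk n N est mu P C =
     (\<integral>\<^sup>+ X. ennreal (sqnorm n (\<lambda>i. est (C X) i - mu i)) \<partial>(clean_sample n N mu P))"

definition minimax_risk :: "nat \<Rightarrow> nat \<Rightarrow> real \<Rightarrow> real \<Rightarrow> (nat \<Rightarrow> real) set \<Rightarrow> ennreal" where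
  "minimax_risk n N eps sg K =
     (INF est\<in>estimators n N. SUP mu\<in>K. SUP P\<in>Xi n (sg\<^sup>2). SUP C\<in>adversaries n N eps.
        risk n N est mu P C)"

end

theory Submission
  imports Defs
begin

(* Le Cam's two-point method, with the adversary used to hide the truth. Take mu0, mu1 in K with
  |mu1 - mu0|^2 <= eps sg^2 and let c be their midpoint. Under mu_k the noise equals c - mu_k with
  probability 1 - eps/2 and a compensating multiple of mu_k - c otherwise; it is centred with
  covariance at most sg^2 I. By Markov's inequality, with probability at least 1/2 at most eps N
  clean points differ from c, and then the adversary moves all of them to c. The estimator sees
  the same constant sample under both hypotheses, so it misses one of mu0, mu1 by at least
  |mu1 - mu0| / 2, whence risk >= |mu1 - mu0|^2 / 8. Star-shapedness supplies such a pair at squared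
  distance min (eps sg^2) (d^2 / 16). *)

lemma card_hits_eq_sum_indicator:
  "finite I \<Longrightarrow> real (card {j\<in>I. xs j \<in> A}) = (\<Sum>j\<in>I. indicator A (xs j))"
  by (simp add: indicator_def of_bool_def[symmetric] Int_def conj_commute)

lemma borel_measurable_card_hits:
  assumes "finite I" "A \<in> sets M"
  shows "(\<lambda>xs. real (card {j\<in>I. xs j \<in> A})) \<in> borel_measurable (PiM I (\<lambda>_. M))"
  unfolding card_hits_eq_sum_indicator[OF \<open>finite I\<close>] using assms(2)
  by (intro borel_measurable_sum measurable_compose[OF measurable_component_singleton borel_measurable_indicator])

lemma sets_PiM_few_hits:
  assumes "finite I" "A \<in> sets M"
  shows "{xs \<in> space (PiM I (\<lambda>_. M)). card {j\<in>I. xs j \<in> A} \<le> m} \<in> sets (PiM I (\<lambda>_. M))"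
proof -
  have "Measurable.pred (PiM I (\<lambda>_. M)) (\<lambda>xs. real (card {j\<in>I. xs j \<in> A}) \<le> real m)"
    using borel_measurable_card_hits[OF assms] by measurable
  then show ?thesis by (simp add: pred_def)
qed

lemma prob_PiM_few_hits_ge:
  assumes M: "prob_space M" and I: "finite I" and A: "A \<in> sets M"
    and small: "2 * real (card I) * measure M A \<le> real m + 1"
  shows "1/2 \<le> measure (PiM I (\<lambda>_. M)) {xs \<in> space (PiM I (\<lambda>_. M)). card {j\<in>I. xs j \<in> A} \<le> m}"
proof -
  let ?Q = "PiM I (\<lambda>_. M)"
  let ?hits = "\<lambda>xs. real (card {j\<in>I. xs j \<in> A})"
  interpret M: prob_space M by (rule M)
  interpret Q: product_prob_space "\<lambda>_. M" I ..
  have hits_meas: "?hits \<in> borel_measurable ?Q" by (rule borel_measurable_card_hits[OF I A])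
  have hits_le: "?hits xs \<le> real (card I)" for xs
    by (simp add: card_mono[OF I])
  have integrable_hits: "integrable ?Q ?hits"
    by (rule Q.integrable_const_bound[where B="real (card I)"]) (use hits_le hits_meas in auto)
  have "(\<integral>xs. indicator A (xs j) \<partial>?Q) = measure M A" if "j \<in> I" for j
  proof -
    have "(\<integral>xs. indicator A (xs j) \<partial>?Q) = (\<integral>x. (indicator A x :: real) \<partial>distr ?Q M (\<lambda>xs. xs j))"
      by (rule integral_distr[symmetric]) (use that A in \<open>auto intro: measurable_component_singleton\<close>)
    then show ?thesis using Q.PiM_component[OF that] A by (simp add: Int_absorb2 sets.sets_into_space)
  qed
  then have "(\<integral>xs. ?hits xs \<partial>?Q) = real (card I) * measure M A"
    unfolding card_hits_eq_sum_indicator[OF I] using A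
    by (subst Bochner_Integration.integral_sum) (auto intro!: Q.integrable_const_bound[where B=1]
        measurable_compose[OF measurable_component_singleton borel_measurable_indicator])
  then have "Q.prob {xs \<in> space ?Q. real m + 1 \<le> ?hits xs} \<le> real (card I) * measure M A / (real m + 1)"
    using integral_Markov_inequality_measure[OF integrable_hits sets.top, of "real m + 1"] by simp
  also have "\<dots> \<le> 1/2"
    using small by (simp add: field_simps)
  finally have many: "Q.prob {xs \<in> space ?Q. real m + 1 \<le> ?hits xs} \<le> 1/2" .
  have "{xs \<in> space ?Q. card {j\<in>I. xs j \<in> A} \<le> m} = space ?Q - {xs \<in> space ?Q. real m + 1 \<le> ?hits xs}"
    by auto
  moreover have "{xs \<in> space ?Q. real m + 1 \<le> ?hits xs} \<in> sets ?Q"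
    using hits_meas by measurable
  ultimately show ?thesis
    using Q.prob_compl many by simp
qed

lemma sqnorm_nonneg: "0 \<le> sqnorm n x"
  by (simp add: sqnorm_def sum_nonneg)

lemma space_vec_space: "space (vec_space n) = {..<n} \<rightarrow>\<^sub>E UNIV"
  by (simp add: vec_space_def space_PiM)

lemma space_sample_space: "space (sample_space n N) = {..<N} \<rightarrow>\<^sub>E space (vec_space n)"
  by (simp add: sample_space_def space_PiM)

lemma singleton_in_sets_vec_space:
  assumes "c \<in> space (vec_space n)"
  shows "{c} \<in> sets (vec_space n)"
proof -
  have "{c} = PiE {..<n} (\<lambda>i. {c i})"
    using assms by (intro PiE_singleton[symmetric]) (simp add: space_vec_space PiE_def)
  then show ?thesis
    by (simp add: vec_space_def sets_PiM_I_finite)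
qed

lemma measurable_vadd [measurable]: "vadd n mu \<in> measurable (vec_space n) (vec_space n)"
  unfolding vec_space_def vadd_def by measurable

lemma sets_vadd_ne:
  assumes "c \<in> space (vec_space n)"
  shows "{x \<in> space (vec_space n). vadd n mu x \<noteq> c} \<in> sets (vec_space n)"
proof -
  have "{x \<in> space (vec_space n). vadd n mu x \<noteq> c}
      = vadd n mu -` (space (vec_space n) - {c}) \<inter> space (vec_space n)"
    using measurable_space[OF measurable_vadd] by auto
  also have "\<dots> \<in> sets (vec_space n)"
    by (intro measurable_sets[OF measurable_vadd] sets.Diff sets.top singleton_in_sets_vec_space assms)
  finally show ?thesis .
qed

lemma measurable_clean_sample_map:
  assumes "sets P = sets (vec_space n)"
  shows "(\<lambda>xs. \<lambda>j\<in>{..<N}. vadd n mu (xs j)) \<in> measurable (PiM {..<N} (\<lambda>_. P)) (sample_space n N)"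
proof -
  have "measurable (PiM {..<N} (\<lambda>_. P)) (sample_space n N)
      = measurable (PiM {..<N} (\<lambda>_. vec_space n)) (sample_space n N)"
    using assms by (intro measurable_cong_sets sets_PiM_cong) auto
  then show ?thesis
    unfolding sample_space_def by simp measurable
qed

definition collapse_adversary ::
    "nat \<Rightarrow> (nat \<Rightarrow> real) \<Rightarrow> nat \<Rightarrow> (nat \<Rightarrow> nat \<Rightarrow> real) \<Rightarrow> (nat \<Rightarrow> nat \<Rightarrow> real)" where
  "collapse_adversary N c m X = (if card {j\<in>{..<N}. X j \<noteq> c} \<le> m then (\<lambda>j\<in>{..<N}. c) else X)"

lemma sets_few_points_ne:
  assumes "c \<in> space (vec_space n)"
  shows "{X \<in> space (sample_space n N). card {j\<in>{..<N}. X j \<noteq> c} \<le> m} \<in> sets (sample_space n N)"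
proof -
  have "{X \<in> space (sample_space n N). card {j\<in>{..<N}. X j \<noteq> c} \<le> m}
      = {X \<in> space (sample_space n N). card {j\<in>{..<N}. X j \<in> space (vec_space n) - {c}} \<le> m}"
    by (intro Collect_cong conj_cong refl arg_cong2[where f="(\<le>)"] arg_cong[where f=card])
       (auto simp: space_sample_space)
  also have "\<dots> \<in> sets (sample_space n N)"
    unfolding sample_space_def
    by (intro sets_PiM_few_hits sets.Diff singleton_in_sets_vec_space assms) auto
  finally show ?thesis .
qed

lemma collapse_adversary_in_adversaries:
  assumes c: "c \<in> space (vec_space n)" and m: "real m \<le> eps * real N"
  shows "collapse_adversary N c m \<in> adversaries n N eps"
  unfolding adversaries_def
proof (intro CollectI conjI ballI)
  have "(\<lambda>j\<in>{..<N}. c) \<in> space (sample_space n N)"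
    using c by (simp add: space_sample_space)
  then show "collapse_adversary N c m \<in> measurable (sample_space n N) (sample_space n N)"
    unfolding collapse_adversary_def
    by (intro measurable_If measurable_const measurable_ident_sets sets_few_points_ne c) auto
next
  fix X
  have "card {j\<in>{..<N}. collapse_adversary N c m X j \<noteq> X j} \<le> m"
  proof (cases "card {j\<in>{..<N}. X j \<noteq> c} \<le> m")
    case True
    moreover have "{j\<in>{..<N}. collapse_adversary N c m X j \<noteq> X j} = {j\<in>{..<N}. X j \<noteq> c}"
      using True by (auto simp: collapse_adversary_def)
    ultimately show ?thesis by simp
  qed (simp add: collapse_adversary_def)
  then show "real (card {j\<in>{..<N}. collapse_adversary N c m X j \<noteq> X j}) \<le> eps * real N"
    using m by linarith
qed

lemma risk_collapse_adversary_ge: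
  assumes P: "prob_space P" "sets P = sets (vec_space n)" and c: "c \<in> space (vec_space n)"
    and few: "2 * real N * measure P {x \<in> space P. vadd n mu x \<noteq> c} \<le> real m + 1"
  shows "ennreal (sqnorm n (\<lambda>i. est (\<lambda>j\<in>{..<N}. c) i - mu i) / 2)
      \<le> risk n N est mu P (collapse_adversary N c m)"
proof -
  let ?Q = "PiM {..<N} (\<lambda>_. P)" and ?S = "sample_space n N"
  let ?Y = "\<lambda>xs. \<lambda>j\<in>{..<N}. vadd n mu (xs j)"
  define E where "E = {X \<in> space ?S. card {j\<in>{..<N}. X j \<noteq> c} \<le> m}"
  define B where "B = {x \<in> space P. vadd n mu x \<noteq> c}"
  define sq where "sq = sqnorm n (\<lambda>i. est (\<lambda>j\<in>{..<N}. c) i - mu i)"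
  interpret Q: prob_space ?Q by (intro prob_space_PiM P)
  have Y: "?Y \<in> measurable ?Q ?S" by (rule measurable_clean_sample_map[OF P(2)])
  have E: "E \<in> sets ?S" unfolding E_def by (rule sets_few_points_ne[OF c])
  have "B \<in> sets P"
    unfolding B_def P(2) sets_eq_imp_space_eq[OF P(2)] by (rule sets_vadd_ne[OF c])
  have hits: "{j\<in>{..<N}. ?Y xs j \<noteq> c} = {j\<in>{..<N}. xs j \<in> B}" if "xs \<in> space ?Q" for xs
    using that by (auto simp: B_def space_PiM)
  have "?Y -` E \<inter> space ?Q = {xs \<in> space ?Q. card {j\<in>{..<N}. ?Y xs j \<noteq> c} \<le> m}"
    unfolding E_def using measurable_space[OF Y] by blast
  also have "\<dots> = {xs \<in> space ?Q. card {j\<in>{..<N}. xs j \<in> B} \<le> m}"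
    by (intro Collect_cong conj_cong refl) (simp only: hits)
  finally have half: "1/2 \<le> Q.prob (?Y -` E \<inter> space ?Q)"
    using prob_PiM_few_hits_ge[OF P(1) _ \<open>B \<in> sets P\<close>, of "{..<N}" m] few unfolding B_def by simp
  have "ennreal (sq / 2) \<le> ennreal sq * emeasure ?Q (?Y -` E \<inter> space ?Q)"
    using mult_left_mono[OF half, of sq]
    by (simp add: Q.emeasure_eq_measure sq_def sqnorm_nonneg ennreal_mult[symmetric])
  also have "\<dots> = (\<integral>\<^sup>+ X. ennreal sq * indicator E X \<partial>distr ?Q ?S ?Y)"
    using E by (simp add: nn_integral_cmult_indicator emeasure_distr[OF Y E])
  also have "\<dots> \<le> risk n N est mu P (collapse_adversary N c m)"
    unfolding risk_def clean_sample_def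
    by (intro nn_integral_mono) (auto simp: E_def sq_def collapse_adversary_def split: split_indicator)
  finally show ?thesis unfolding sq_def .
qed

definition two_point_law :: "nat \<Rightarrow> real \<Rightarrow> (nat \<Rightarrow> real) \<Rightarrow> (nat \<Rightarrow> real) \<Rightarrow> (nat \<Rightarrow> real) measure" where
  "two_point_law n p u v = distr (measure_pmf (bernoulli_pmf p)) (vec_space n) (\<lambda>b. if b then v else u)"

lemma space_two_point_law [simp]: "space (two_point_law n p u v) = space (vec_space n)"
  by (simp add: two_point_law_def)

lemma prob_space_two_point_law:
  "u \<in> space (vec_space n) \<Longrightarrow> v \<in> space (vec_space n) \<Longrightarrow> prob_space (two_point_law n p u v)"
  unfolding two_point_law_def by (intro prob_space.prob_space_distr prob_space_measure_pmf) auto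

lemma integral_two_point_law:
  assumes uv: "u \<in> space (vec_space n)" "v \<in> space (vec_space n)"
    and f: "f \<in> borel_measurable (vec_space n)" and p: "0 \<le> p" "p \<le> 1"
  shows "integrable (two_point_law n p u v) f"
    and "(\<integral>x. f x \<partial>two_point_law n p u v) = (1 - p) * f u + p * f v"
proof -
  have g: "(\<lambda>b. if b then v else u) \<in> measurable (measure_pmf (bernoulli_pmf p)) (vec_space n)"
    using uv by auto
  show "integrable (two_point_law n p u v) f"
    unfolding two_point_law_def integrable_distr_eq[OF g f]
    by (rule integrable_measure_pmf_finite) simp
  have "(\<integral>x. f x \<partial>two_point_law n p u v) = (\<integral>b. f (if b then v else u) \<partial>measure_pmf (bernoulli_pmf p))"
    unfolding two_point_law_def by (rule integral_distr[OF g f])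
  also have "\<dots> = (\<Sum>b\<in>UNIV. f (if b then v else u) * pmf (bernoulli_pmf p) b)"
    by (rule integral_measure_pmf_real) auto
  also have "\<dots> = (1 - p) * f u + p * f v"
    using p by (simp add: UNIV_bool)
  finally show "(\<integral>x. f x \<partial>two_point_law n p u v) = (1 - p) * f u + p * f v" .
qed

lemma measure_two_point_law_le:
  assumes uv: "u \<in> space (vec_space n)" "v \<in> space (vec_space n)" and p: "0 \<le> p" "p \<le> 1"
    and B: "B \<in> sets (vec_space n)" "u \<notin> B"
  shows "measure (two_point_law n p u v) B \<le> p"
proof -
  have "measure (two_point_law n p u v) B = (\<integral>x. indicator B x \<partial>two_point_law n p u v)"
    using B sets.sets_into_space[OF B(1)] by (simp add: Int_absorb2)
  also have "\<dots> = p * indicator B v"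
    using integral_two_point_law(2)[OF uv borel_measurable_indicator[OF B(1)] p] B(2) by simp
  also have "\<dots> \<le> p"
    using p by (simp add: indicator_def)
  finally show ?thesis .
qed

definition centred_two_point_law :: "nat \<Rightarrow> real \<Rightarrow> (nat \<Rightarrow> real) \<Rightarrow> (nat \<Rightarrow> real) measure" where
  "centred_two_point_law n p w = two_point_law n p (\<lambda>i\<in>{..<n}. - w i) (\<lambda>i\<in>{..<n}. (1 - p) / p * w i)"

lemma centred_two_point_law_in_Xi:
  assumes p: "0 < p" "p < 1" and w: "sqnorm n w \<le> p * s2"
  shows "centred_two_point_law n p w \<in> Xi n s2"
proof -
  let ?u = "\<lambda>i\<in>{..<n}. - w i" and ?v = "\<lambda>i\<in>{..<n}. (1 - p) / p * w i"
  let ?P = "two_point_law n p ?u ?v"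
  have uv: "?u \<in> space (vec_space n)" "?v \<in> space (vec_space n)"
    by (simp_all add: space_vec_space)
  note integral = integral_two_point_law[OF uv _ less_imp_le[OF p(1)] less_imp_le[OF p(2)]]
  have coord: "(\<lambda>x. x i) \<in> borel_measurable (vec_space n)" if "i < n" for i
    unfolding vec_space_def using that by (intro measurable_component_singleton) simp
  have second_moment: "(\<integral>x. (\<Sum>i<n. v i * x i)\<^sup>2 \<partial>?P) \<le> s2" if v: "(\<Sum>i<n. (v i)\<^sup>2) = 1" for v
  proof -
    define a where "a = (\<Sum>i<n. v i * w i)"
    have lin: "(\<lambda>x. (\<Sum>i<n. v i * x i)\<^sup>2) \<in> borel_measurable (vec_space n)"
      unfolding vec_space_def by measurable
    have at_u: "(\<Sum>i<n. v i * ?u i) = - a"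
      unfolding a_def by (simp add: sum_negf[symmetric])
    have at_v: "(\<Sum>i<n. v i * ?v i) = (1 - p) / p * a"
      unfolding a_def by (simp add: sum_distrib_left mult.left_commute)
    have "a\<^sup>2 \<le> sqnorm n w"
      using Cauchy_Schwarz_ineq_sum[of v w "{..<n}"] v unfolding a_def sqnorm_def by simp
    have "(\<integral>x. (\<Sum>i<n. v i * x i)\<^sup>2 \<partial>?P) = (1 - p) * (- a)\<^sup>2 + p * ((1 - p) / p * a)\<^sup>2"
      using integral(2)[OF lin] unfolding at_u at_v .
    also have "\<dots> = (1 - p) / p * a\<^sup>2"
      using p by (simp add: field_simps power2_eq_square)
    also have "\<dots> \<le> a\<^sup>2 / p"
      using p by (simp add: divide_right_mono mult_left_le_one_le)
    also have "\<dots> \<le> s2"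
      using \<open>a\<^sup>2 \<le> sqnorm n w\<close> w p by (simp add: pos_divide_le_eq mult.commute)
    finally show ?thesis .
  qed
  show ?thesis
    unfolding Xi_def centred_two_point_law_def
  proof (intro CollectI conjI allI impI second_moment)
    show "prob_space ?P" by (rule prob_space_two_point_law[OF uv])
    show "sets ?P = sets (vec_space n)" by (simp add: two_point_law_def)
    fix i assume "i < n"
    show "integrable ?P (\<lambda>x. x i)"
      by (rule integral(1)[OF coord[OF \<open>i < n\<close>]])
    show "integrable ?P (\<lambda>x. (x i)\<^sup>2)"
      by (rule integral(1)[OF borel_measurable_power[OF coord[OF \<open>i < n\<close>]]])
    show "(\<integral>x. x i \<partial>?P) = 0"
      using integral(2)[OF coord[OF \<open>i < n\<close>]] \<open>i < n\<close> p by (simp add: field_simps)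
  qed
qed

lemma measure_centred_two_point_law_vadd_ne:
  fixes mu c :: "nat \<Rightarrow> real"
  assumes c: "c \<in> space (vec_space n)" and p: "0 < p" "p \<le> 1"
  defines "P \<equiv> centred_two_point_law n p (\<lambda>i. mu i - c i)"
  shows "measure P {x \<in> space P. vadd n mu x \<noteq> c} \<le> p"
proof -
  have "vadd n mu (\<lambda>i\<in>{..<n}. - (mu i - c i)) = restrict c {..<n}"
    unfolding vadd_def by (intro restrict_ext) simp
  also have "\<dots> = c"
    using c by (simp add: space_vec_space PiE_restrict)
  finally show ?thesis
    unfolding P_def centred_two_point_law_def space_two_point_law using c p
    by (intro measure_two_point_law_le sets_vadd_ne) (simp_all add: space_vec_space)
qed

lemma minimax_risk_geI:
  assumes "\<And>est. est \<in> estimators n N \<Longrightarrow>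
      \<exists>mu\<in>K. \<exists>P\<in>Xi n (sg\<^sup>2). \<exists>C\<in>adversaries n N eps. x \<le> risk n N est mu P C"
  shows "x \<le> minimax_risk n N eps sg K"
  unfolding minimax_risk_def
proof (rule INF_greatest)
  fix est assume "est \<in> estimators n N"
  then obtain mu P C where "mu \<in> K" "P \<in> Xi n (sg\<^sup>2)" "C \<in> adversaries n N eps"
      and "x \<le> risk n N est mu P C"
    using assms by blast
  then show "x \<le> (SUP mu\<in>K. SUP P\<in>Xi n (sg\<^sup>2). SUP C\<in>adversaries n N eps. risk n N est mu P C)"
    by (meson SUP_upper2)
qed

lemma sqnorm_diff_le_twice_sum:
  "sqnorm n (\<lambda>i. a i - b i) \<le> 2 * sqnorm n (\<lambda>i. e i - a i) + 2 * sqnorm n (\<lambda>i. e i - b i)"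
proof -
  have "(a i - b i)\<^sup>2 \<le> 2 * (e i - a i)\<^sup>2 + 2 * (e i - b i)\<^sup>2" for i
    using sum_squares_ge_zero[of "2 * e i - a i - b i" 0] by (simp add: power2_eq_square algebra_simps)
  then show ?thesis
    unfolding sqnorm_def by (simp add: sum_distrib_left sum.distrib[symmetric] sum_mono)
qed

lemma minimax_risk_ge_two_point:
  assumes mu0: "mu0 \<in> K" and mu1: "mu1 \<in> K"
    and close: "sqnorm n (\<lambda>i. mu1 i - mu0 i) \<le> eps * sg\<^sup>2" and eps: "0 < eps" "eps \<le> 1"
  shows "ennreal (sqnorm n (\<lambda>i. mu1 i - mu0 i) / 8) \<le> minimax_risk n N eps sg K"
proof -
  define p where "p = eps / 2"
  define m where "m = nat \<lfloor>eps * real N\<rfloor>"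
  define c where "c = (\<lambda>i\<in>{..<n}. (mu0 i + mu1 i) / 2)"
  define law where "law mu = centred_two_point_law n p (\<lambda>i. mu i - c i)" for mu
  define C where "C = collapse_adversary N c m"
  let ?dd = "sqnorm n (\<lambda>i. mu1 i - mu0 i)"
  have p: "0 < p" "p < 1" using eps by (simp_all add: p_def)
  have c: "c \<in> space (vec_space n)" by (simp add: c_def space_vec_space)
  have m: "real m \<le> eps * real N" "eps * real N < real m + 1"
    using eps by (simp_all add: m_def)
  have C: "C \<in> adversaries n N eps"
    unfolding C_def by (rule collapse_adversary_in_adversaries[OF c m(1)])
  have law: "law mu \<in> Xi n (sg\<^sup>2)" if "mu = mu0 \<or> mu = mu1" for mu
  proof -
    have "sqnorm n (\<lambda>i. mu i - c i) = ?dd / 4"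
      using that unfolding sqnorm_def c_def
      by (auto simp: sum_divide_distrib[symmetric] power2_eq_square field_simps intro!: sum.cong)
    also have "\<dots> \<le> p * sg\<^sup>2"
      using close sqnorm_nonneg[of n "\<lambda>i. mu1 i - mu0 i"] by (simp add: p_def)
    finally show ?thesis
      unfolding law_def by (rule centred_two_point_law_in_Xi[OF p])
  qed
  have few: "2 * real N * measure (law mu) {x \<in> space (law mu). vadd n mu x \<noteq> c} \<le> real m + 1" for mu
  proof -
    have "2 * real N * measure (law mu) {x \<in> space (law mu). vadd n mu x \<noteq> c} \<le> 2 * real N * p"
      unfolding law_def using measure_centred_two_point_law_vadd_ne[OF c p(1)] p
      by (intro mult_left_mono) simp_all
    also have "\<dots> < real m + 1"
      using m(2) by (simp add: p_def mult.commute)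
    finally show ?thesis by simp
  qed
  have risk: "ennreal (sqnorm n (\<lambda>i. est (\<lambda>j\<in>{..<N}. c) i - mu i) / 2) \<le> risk n N est mu (law mu) C"
    if "mu = mu0 \<or> mu = mu1" for est mu
    unfolding C_def using law[OF that] c few
    by (intro risk_collapse_adversary_ge) (auto simp: Xi_def)
  show ?thesis
  proof (rule minimax_risk_geI)
    fix est :: "(nat \<Rightarrow> nat \<Rightarrow> real) \<Rightarrow> nat \<Rightarrow> real"
    let ?e = "est (\<lambda>j\<in>{..<N}. c)"
    have "?dd \<le> 2 * sqnorm n (\<lambda>i. ?e i - mu1 i) + 2 * sqnorm n (\<lambda>i. ?e i - mu0 i)"
      by (rule sqnorm_diff_le_twice_sum)
    then have "\<exists>mu. (mu = mu0 \<or> mu = mu1) \<and> ?dd / 4 \<le> sqnorm n (\<lambda>i. ?e i - mu i)"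
      by (cases "?dd / 4 \<le> sqnorm n (\<lambda>i. ?e i - mu0 i)") auto
    then obtain mu where mu: "mu = mu0 \<or> mu = mu1" and far: "?dd / 4 \<le> sqnorm n (\<lambda>i. ?e i - mu i)"
      by blast
    have "ennreal (?dd / 8) \<le> ennreal (sqnorm n (\<lambda>i. ?e i - mu i) / 2)"
      using far by (intro ennreal_leI) simp
    also have "\<dots> \<le> risk n N est mu (law mu) C"
      by (rule risk[OF mu])
    finally show "\<exists>mu\<in>K. \<exists>P\<in>Xi n (sg\<^sup>2). \<exists>C\<in>adversaries n N eps. ennreal (?dd / 8) \<le> risk n N est mu P C"
      using mu mu0 mu1 law[OF mu] C by blast
  qed
qed

lemma sqrt_sqnorm_diff_triangle:
  "sqrt (sqnorm n (\<lambda>i. x i - y i)) \<le> sqrt (sqnorm n (\<lambda>i. x i - z i)) + sqrt (sqnorm n (\<lambda>i. y i - z i))"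
proof -
  have "L2_set (\<lambda>i. (x i - z i) + (z i - y i)) {..<n} \<le> L2_set (\<lambda>i. x i - z i) {..<n} + L2_set (\<lambda>i. z i - y i) {..<n}"
    by (rule L2_set_triangle_ineq)
  moreover have "L2_set (\<lambda>i. z i - y i) {..<n} = L2_set (\<lambda>i. y i - z i) {..<n}"
    by (simp add: L2_set_def power2_commute)
  ultimately show ?thesis
    by (simp add: L2_set_def sqnorm_def)
qed

lemma dist_le_diam_n:
  assumes "bounded_n n K" "x \<in> K" "y \<in> K"
  shows "sqrt (sqnorm n (\<lambda>i. x i - y i)) \<le> diam_n n K"
proof -
  obtain B where B: "\<And>x. x \<in> K \<Longrightarrow> sqnorm n x \<le> B"
    using assms(1) unfolding bounded_n_def by blast
  have dist_le: "sqrt (sqnorm n (\<lambda>i. x' i - y' i)) \<le> 2 * sqrt B" if "x' \<in> K" "y' \<in> K" for x' y'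
  proof -
    have "sqrt (sqnorm n (\<lambda>i. x' i - y' i)) \<le> sqrt (sqnorm n x') + sqrt (sqnorm n y')"
      using sqrt_sqnorm_diff_triangle[of n x' y' "\<lambda>_. 0"] by simp
    then show ?thesis
      using real_sqrt_le_mono[OF B[OF that(1)]] real_sqrt_le_mono[OF B[OF that(2)]] by linarith
  qed
  have "sqrt (sqnorm n (\<lambda>i. x i - y i)) \<le> (SUP y'\<in>K. sqrt (sqnorm n (\<lambda>i. x i - y' i)))"
    using dist_le assms(2,3) by (intro cSUP_upper bdd_aboveI2) auto
  also have "\<dots> \<le> diam_n n K"
    unfolding diam_n_def using dist_le assms(2,3) by (intro cSUP_upper bdd_aboveI2 cSUP_least) auto
  finally show ?thesis .
qed

lemma diam_n_le:
  assumes "K \<noteq> {}" "\<And>x y. x \<in> K \<Longrightarrow> y \<in> K \<Longrightarrow> sqrt (sqnorm n (\<lambda>i. x i - y i)) \<le> D"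
  shows "diam_n n K \<le> D"
  unfolding diam_n_def using assms by (intro cSUP_least) auto

lemma exists_far_point:
  assumes "bounded_n n K" "ks \<in> K"
  shows "\<exists>k\<in>K. diam_n n K / 4 \<le> sqrt (sqnorm n (\<lambda>i. k i - ks i))"
proof (rule ccontr)
  assume "\<not> ?thesis"
  then have near: "sqrt (sqnorm n (\<lambda>i. k i - ks i)) < diam_n n K / 4" if "k \<in> K" for k
    using that by force
  have "diam_n n K \<le> diam_n n K / 2"
  proof (rule diam_n_le)
    fix x y assume "x \<in> K" "y \<in> K"
    then show "sqrt (sqnorm n (\<lambda>i. x i - y i)) \<le> diam_n n K / 2"
      using sqrt_sqnorm_diff_triangle[of n x y ks] near[of x] near[of y] by linarith
  qed (use assms in auto)
  moreover have "0 < diam_n n K"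
    using near[OF assms(2)] by (simp add: sqnorm_def)
  ultimately show False by simp
qed

lemma segment_point_at_distance:
  assumes star: "\<forall>k\<in>K. \<forall>t\<in>{0..1}. (\<lambda>i\<in>{..<n}. (1 - t) * ks i + t * k i) \<in> K"
    and k: "k \<in> K" and r: "0 \<le> r" "r \<le> sqrt (sqnorm n (\<lambda>i. k i - ks i))"
  shows "\<exists>mu\<in>K. sqnorm n (\<lambda>i. mu i - ks i) = r\<^sup>2"
proof -
  define \<rho> where "\<rho> = sqrt (sqnorm n (\<lambda>i. k i - ks i))"
  define t where "t = r / \<rho>" \<comment> \<open>when \<rho> = 0 also r = 0, and t = 0 because r / 0 = 0\<close>
  define mu where "mu = (\<lambda>i\<in>{..<n}. (1 - t) * ks i + t * k i)"
  have "t \<in> {0..1}"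
    using r sqnorm_nonneg[of n "\<lambda>i. k i - ks i"] unfolding t_def \<rho>_def by (auto simp: divide_le_eq_1)
  then have "mu \<in> K"
    unfolding mu_def using star k by blast
  have "sqnorm n (\<lambda>i. mu i - ks i) = t\<^sup>2 * sqnorm n (\<lambda>i. k i - ks i)"
    unfolding mu_def sqnorm_def
    by (auto simp: sum_distrib_left power2_eq_square algebra_simps intro!: sum.cong)
  also have "\<dots> = t\<^sup>2 * \<rho>\<^sup>2"
    by (simp add: \<rho>_def sqnorm_nonneg)
  also have "\<dots> = r\<^sup>2"
    using r unfolding t_def \<rho>_def[symmetric] by (cases "\<rho> = 0") (simp_all add: power_divide)
  finally show ?thesis
    using \<open>mu \<in> K\<close> by blast
qed

lemma star_shaped_point_at_sqdist:
  assumes K: "bounded_n n K" "ks \<in> K"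
    and star: "\<forall>k\<in>K. \<forall>t\<in>{0..1}. (\<lambda>i\<in>{..<n}. (1 - t) * ks i + t * k i) \<in> K"
    and \<delta>2: "0 \<le> \<delta>2" "\<delta>2 \<le> (diam_n n K)\<^sup>2 / 16"
  shows "\<exists>mu\<in>K. sqnorm n (\<lambda>i. mu i - ks i) = \<delta>2"
proof -
  obtain k where k: "k \<in> K" and far: "diam_n n K / 4 \<le> sqrt (sqnorm n (\<lambda>i. k i - ks i))"
    using exists_far_point[OF K] by blast
  have "0 \<le> diam_n n K"
    using dist_le_diam_n[OF K(1) K(2) K(2)] by (simp add: sqnorm_def)
  have "sqrt \<delta>2 \<le> sqrt ((diam_n n K / 4)\<^sup>2)"
    using \<delta>2(2) by (intro real_sqrt_le_mono) (simp add: power_divide)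
  also have "\<dots> \<le> sqrt (sqnorm n (\<lambda>i. k i - ks i))"
    using \<open>0 \<le> diam_n n K\<close> far by simp
  finally show ?thesis
    using segment_point_at_distance[OF star k real_sqrt_ge_zero[OF \<delta>2(1)]] \<delta>2(1) by simp
qed

theorem mainTheorem4:
  shows "\<exists>a>0. \<forall>(n::nat) (N::nat) (K::(nat \<Rightarrow> real) set) (sg::real) (eps::real).
     K \<subseteq> space (vec_space n) \<and> bounded_n n K \<and> star_shaped_n n K \<and>
     sg > 0 \<and> 0 < eps \<and> eps < 1/2 \<and> N \<ge> 1 \<longrightarrow>
     minimax_risk n N eps sg K \<ge> ennreal (a * min (eps * sg\<^sup>2) ((diam_n n K)\<^sup>2))"
proof (intro exI[of _ "1/128"] conjI allI impI)
  fix n N :: nat and K :: "(nat \<Rightarrow> real) set" and sg eps :: real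
  assume H: "K \<subseteq> space (vec_space n) \<and> bounded_n n K \<and> star_shaped_n n K \<and>
     sg > 0 \<and> 0 < eps \<and> eps < 1/2 \<and> N \<ge> 1"
  then obtain ks where ks: "ks \<in> K" and star: "\<forall>k\<in>K. \<forall>t\<in>{0..1}. (\<lambda>i\<in>{..<n}. (1 - t) * ks i + t * k i) \<in> K"
    unfolding star_shaped_n_def by blast
  define d where "d = diam_n n K"
  define \<delta>2 where "\<delta>2 = min (eps * sg\<^sup>2) (d\<^sup>2 / 16)"
  have "0 \<le> \<delta>2"
    using H by (simp add: \<delta>2_def)
  moreover have "\<delta>2 \<le> (diam_n n K)\<^sup>2 / 16"
    unfolding \<delta>2_def d_def by simp
  ultimately obtain mu where mu: "mu \<in> K" "sqnorm n (\<lambda>i. mu i - ks i) = \<delta>2"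
    using star_shaped_point_at_sqdist[OF _ ks star] H by blast
  have "ennreal (1/128 * min (eps * sg\<^sup>2) (d\<^sup>2)) \<le> ennreal (\<delta>2 / 8)"
    using \<open>0 \<le> \<delta>2\<close> by (intro ennreal_leI) (auto simp: \<delta>2_def min_def)
  also have "\<dots> \<le> minimax_risk n N eps sg K"
    unfolding mu(2)[symmetric]
    by (rule minimax_risk_ge_two_point[OF ks mu(1)]) (use mu(2) H in \<open>auto simp: \<delta>2_def\<close>)
  finally show "minimax_risk n N eps sg K \<ge> ennreal (1/128 * min (eps * sg\<^sup>2) ((diam_n n K)\<^sup>2))"
    unfolding d_def .
qed simp
end
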